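(* Let $G$ be a compact group and let $x\in G$ be an element such that $Pr(\langle x\rangle,G)>0$. Then there is a positive integer $e$ such that $x^e$ is contained in an abstract (not necessarily closed) subgroup $N$ of $G$ which is torsion-free, abelian, normal in $G$, and contained in $FC(G)$.
   Context: For a closed subgroup $H$ of a compact group $G$, $Pr(H,G)=(\mu_H\times\mu_G)(\{(h,g)\in H\times G: hg=gh\})$, where $\mu_H,\mu_G$ are the normalized Haar measures. $\langle x\rangle$ is the closed subgroup topologically generated by $x$. $FC(G)$ denotes the set of all elements $y\in G$ whose centralizer $C_G(y)$ has finite index in $G$ (an abstract subgroup of $G$). *)

theory Defs
  imports "HOL-Analysis.Analysis" "HOL-Algebra.Algebra"
begin

definition compact_group :: "('a, 'b) monoid_scheme \<Rightarrow> 'a topology \<Rightarrow> bool" where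
  "compact_group G T \<longleftrightarrow> group G \<and> topspace T = carrier G
     \<and> continuous_map (prod_topology T T) T (\<lambda>(a, b). a \<otimes>\<^bsub>G\<^esub> b)
     \<and> continuous_map T T (\<lambda>a. inv\<^bsub>G\<^esub> a)
     \<and> compact_space T \<and> Hausdorff_space T"

definition borel_sets_of :: "'a topology \<Rightarrow> 'a set set" where
  "borel_sets_of T = sigma_sets (topspace T) {U. openin T U}"

definition normalized_haar :: "('a, 'b) monoid_scheme \<Rightarrow> 'a topology \<Rightarrow> 'a set \<Rightarrow> 'a measure \<Rightarrow> bool" where
  "normalized_haar G T H \<mu> \<longleftrightarrow>
     space \<mu> = H \<and> sets \<mu> = borel_sets_of (subtopology T H) \<and> emeasure \<mu> H = 1
     \<and> (\<forall>h\<in>H. \<forall>A\<in>sets \<mu>. emeasure \<mu> (h <#\<^bsub>G\<^esub> A) = emeasure \<mu> A)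
     \<and> (\<forall>A\<in>sets \<mu>. emeasure \<mu> A =
           (INF U\<in>{U. openin (subtopology T H) U \<and> A \<subseteq> U}. emeasure \<mu> U))
     \<and> (\<forall>U. openin (subtopology T H) U \<longrightarrow> emeasure \<mu> U =
           (SUP K\<in>{K. compactin (subtopology T H) K \<and> K \<subseteq> U}. emeasure \<mu> K))"

definition centralizer :: "('a, 'b) monoid_scheme \<Rightarrow> 'a \<Rightarrow> 'a set" where
  "centralizer G y = {g \<in> carrier G. g \<otimes>\<^bsub>G\<^esub> y = y \<otimes>\<^bsub>G\<^esub> g}"

text \<open>Pr(H,G) = (mu_H x mu_G){(h,g). hg = gh}, written via Fubini as the integral over H
  of mu_G(C_G(h)) (C_G(h) is closed, hence Borel).\<close>
definition commuting_prob :: "('a, 'b) monoid_scheme \<Rightarrow> 'a measure \<Rightarrow> 'a measure \<Rightarrow> ennreal" where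
  "commuting_prob G \<mu>H \<mu>G = (\<integral>\<^sup>+ h. emeasure \<mu>G (centralizer G h) \<partial>\<mu>H)"

definition top_gen :: "('a, 'b) monoid_scheme \<Rightarrow> 'a topology \<Rightarrow> 'a \<Rightarrow> 'a set" where
  "top_gen G T x = T closure_of (generate G {x})"

definition FC :: "('a, 'b) monoid_scheme \<Rightarrow> 'a set" where
  "FC G = {y \<in> carrier G. finite (rcosets\<^bsub>G\<^esub> (centralizer G y))}"

definition torsion_free :: "('a, 'b) monoid_scheme \<Rightarrow> 'a set \<Rightarrow> bool" where
  "torsion_free G N \<longleftrightarrow> (\<forall>y\<in>N. \<forall>n::nat. n > 0 \<longrightarrow> y [^]\<^bsub>G\<^esub> n = \<one>\<^bsub>G\<^esub> \<longrightarrow> y = \<one>\<^bsub>G\<^esub>)"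

end

theory Submission
  imports Defs
begin

text \<open>Since \<open>Pr(\<langle>x\<rangle>,G) > 0\<close>, some set \<open>A\<close> of positive Haar measure in \<open>\<langle>x\<rangle>\<close> consists
  of elements whose centralizers have positive Haar measure in \<open>G\<close>; such a centralizer has only
  finitely many cosets, so \<open>A \<subseteq> FC(G)\<close>. The translates \<open>x\<^sup>n A\<close> all have the measure of \<open>A\<close>,
  so two of them meet and some power \<open>x\<^sup>e\<close> lies in \<open>A A\<^sup>-\<^sup>1 \<subseteq> FC(G)\<close>.

  For \<open>y = x\<^sup>e\<close>, conjugation by \<open>y\<close> permutes the finite conjugacy class of \<open>y\<close>, so some
  power \<open>z = y\<^sup>m\<close> centralizes it. The conjugacy class of \<open>z\<close> is then a finite set of pairwise
  commuting elements, generating an abelian normal subgroup \<open>B \<subseteq> FC(G)\<close>. Being finitely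
  generated, \<open>B\<close> has a common exponent \<open>d\<close> for its torsion elements, and \<open>N = B\<^sup>d\<close> is
  torsion-free and contains \<open>y\<^sup>m\<^sup>d\<close>.\<close>

lemma finite_image_iff_same_fibres:
  assumes fibres: "\<And>g g'. g \<in> S \<Longrightarrow> g' \<in> S \<Longrightarrow> k g = k g' \<longleftrightarrow> p g = p g'"
  shows "finite (k ` S) \<longleftrightarrow> finite (p ` S)"
proof -
  have "(\<lambda>v. p (inv_into S k v)) ` k ` S = p ` S"
    unfolding image_image
    by (rule image_cong[OF refl]) (meson fibres f_inv_into_f imageI inv_into_into)
  moreover have "(\<lambda>v. k (inv_into S p v)) ` p ` S = k ` S"
    unfolding image_image
    by (rule image_cong[OF refl]) (meson fibres f_inv_into_f imageI inv_into_into)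
  ultimately show ?thesis by (metis finite_imageI)
qed

lemma (in finite_measure) disjoint_family_equal_measure_imp_finite:
  assumes "disjoint_family_on F I" and "\<And>i. i \<in> I \<Longrightarrow> F i \<in> sets M"
    and "\<And>i. i \<in> I \<Longrightarrow> measure M (F i) = p" and "p > 0"
  shows "finite I"
proof (rule ccontr)
  assume "infinite I"
  obtain k :: nat where k: "measure M (space M) < k * p"
    using ex_less_of_nat_mult[OF \<open>p > 0\<close>] by blast
  obtain J where J: "J \<subseteq> I" "finite J" "card J = k"
    using infinite_arbitrarily_large[OF \<open>infinite I\<close>] by blast
  have "k * p = (\<Sum>i\<in>J. measure M (F i))"
    using J assms(3) by (simp add: subset_iff)
  also have "\<dots> = measure M (\<Union>i\<in>J. F i)"
    using J assms(1,2) by (intro finite_measure_finite_Union[symmetric]) (auto intro: disjoint_family_on_mono)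
  also have "\<dots> \<le> measure M (space M)"
    by (rule bounded_measure)
  finally show False using k by simp
qed

text \<open>The function need not be measurable: \<open>\<integral>\<^sup>+\<close> is the supremum over the simple functions below it.\<close>
lemma nn_integral_pos_imp_pos_set:
  assumes "0 < (\<integral>\<^sup>+ x. f x \<partial>M)"
  obtains A where "A \<in> sets M" "0 < emeasure M A" "\<And>x. x \<in> A \<Longrightarrow> 0 < f x"
proof -
  obtain g where g: "simple_function M g" "g \<le> f" "0 < integral\<^sup>S M g"
    using assms unfolding nn_integral_def less_SUP_iff by auto
  obtain v where v: "0 < v * emeasure M (g -` {v} \<inter> space M)"
  proof (rule ccontr)
    assume "\<not> thesis"
    then have "\<And>v. v * emeasure M (g -` {v} \<inter> space M) = 0"
      using that by (metis not_gr_zero)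
    then have "integral\<^sup>S M g = 0"
      unfolding simple_integral_def by (intro sum.neutral) blast
    with g(3) show False by simp
  qed
  show thesis
  proof
    show "g -` {v} \<inter> space M \<in> sets M" using simple_functionD(2)[OF g(1)] .
    show "0 < emeasure M (g -` {v} \<inter> space M)" using v by (metis mult_zero_right not_gr_zero)
    have "0 < v" using v by (metis mult_zero_left not_gr_zero)
    moreover have "g x = v" if "x \<in> g -` {v} \<inter> space M" for x using that by simp
    ultimately show "0 < f x" if "x \<in> g -` {v} \<inter> space M" for x
      using that g(2) by (metis le_fun_def order.strict_trans2)
  qed
qed


section \<open>Conjugacy classes and the FC-centre\<close>

definition conj_class :: "('a, 'b) monoid_scheme \<Rightarrow> 'a \<Rightarrow> 'a set" where
  "conj_class G a = (\<lambda>g. g \<otimes>\<^bsub>G\<^esub> a \<otimes>\<^bsub>G\<^esub> inv\<^bsub>G\<^esub> g) ` carrier G"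

context group
begin

lemma inv_mult_cancel_left [simp]: "x \<in> carrier G \<Longrightarrow> y \<in> carrier G \<Longrightarrow> inv x \<otimes> (x \<otimes> y) = y"
  by (simp add: m_assoc[symmetric])

lemma mult_inv_cancel_left [simp]: "x \<in> carrier G \<Longrightarrow> y \<in> carrier G \<Longrightarrow> x \<otimes> (inv x \<otimes> y) = y"
  by (simp add: m_assoc[symmetric])

lemma centralizer_subgroup:
  assumes "a \<in> carrier G"
  shows "subgroup (centralizer G a) G"
proof (rule subgroupI)
  show "centralizer G a \<subseteq> carrier G" unfolding centralizer_def by auto
  have "\<one> \<in> centralizer G a" using assms unfolding centralizer_def by simp
  then show "centralizer G a \<noteq> {}" by blast
next
  fix h assume "h \<in> centralizer G a"
  then have h: "h \<in> carrier G" "h \<otimes> a = a \<otimes> h" unfolding centralizer_def by auto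
  have "inv h \<otimes> a = inv h \<otimes> (a \<otimes> h) \<otimes> inv h"
    using assms h by (simp add: m_assoc)
  also have "\<dots> = a \<otimes> inv h"
    using assms h by (simp flip: h(2) add: m_assoc)
  finally show "inv h \<in> centralizer G a"
    using h unfolding centralizer_def by simp
next
  fix h k assume "h \<in> centralizer G a" "k \<in> centralizer G a"
  then have h: "h \<in> carrier G" "h \<otimes> a = a \<otimes> h" and k: "k \<in> carrier G" "k \<otimes> a = a \<otimes> k"
    unfolding centralizer_def by auto
  have "h \<otimes> k \<otimes> a = h \<otimes> a \<otimes> k"
    using assms h(1) k by (simp add: m_assoc)
  also have "\<dots> = a \<otimes> (h \<otimes> k)"
    using assms h k(1) by (simp add: m_assoc)
  finally show "h \<otimes> k \<in> centralizer G a"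
    using h k unfolding centralizer_def by simp
qed

lemma inv_mult_mem_centralizer_iff:
  assumes "a \<in> carrier G" "g \<in> carrier G" "g' \<in> carrier G"
  shows "inv g \<otimes> g' \<in> centralizer G a \<longleftrightarrow> g' \<otimes> a \<otimes> inv g' = g \<otimes> a \<otimes> inv g"
proof -
  have cancel: "x = y \<longleftrightarrow> g \<otimes> x \<otimes> inv g' = g \<otimes> y \<otimes> inv g'"
    if "x \<in> carrier G" "y \<in> carrier G" for x y
    using that assms by simp
  have "inv g \<otimes> g' \<otimes> a = a \<otimes> (inv g \<otimes> g') \<longleftrightarrow>
        g \<otimes> (inv g \<otimes> g' \<otimes> a) \<otimes> inv g' = g \<otimes> (a \<otimes> (inv g \<otimes> g')) \<otimes> inv g'"
    using assms by (intro cancel) simp_all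
  also have "\<dots> \<longleftrightarrow> g' \<otimes> a \<otimes> inv g' = g \<otimes> a \<otimes> inv g"
    using assms by (simp add: m_assoc)
  finally show ?thesis
    using assms unfolding centralizer_def by simp
qed

lemma conj_class_subset_carrier: "a \<in> carrier G \<Longrightarrow> conj_class G a \<subseteq> carrier G"
  unfolding conj_class_def by auto

lemma conj_class_self: "a \<in> carrier G \<Longrightarrow> a \<in> conj_class G a"
  unfolding conj_class_def by (auto intro!: image_eqI[of _ _ \<one>])

lemma conj_class_conj_eq:
  assumes "a \<in> carrier G" "h \<in> carrier G"
  shows "conj_class G (h \<otimes> a \<otimes> inv h) = conj_class G a"
proof -
  have "conj_class G (h \<otimes> a \<otimes> inv h) = (\<lambda>g. g \<otimes> a \<otimes> inv g) ` (\<lambda>g. g \<otimes> h) ` carrier G"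
    unfolding conj_class_def image_image using assms
    by (intro image_cong) (auto simp: m_assoc inv_mult_group)
  also have "(\<lambda>g. g \<otimes> h) ` carrier G = carrier G"
  proof
    show "carrier G \<subseteq> (\<lambda>g. g \<otimes> h) ` carrier G"
    proof
      fix g assume "g \<in> carrier G"
      with assms have "g = g \<otimes> inv h \<otimes> h" "g \<otimes> inv h \<in> carrier G" by (simp_all add: m_assoc)
      then show "g \<in> (\<lambda>g. g \<otimes> h) ` carrier G" by blast
    qed
  qed (use assms in auto)
  also have "(\<lambda>g. g \<otimes> a \<otimes> inv g) ` carrier G = conj_class G a"
    unfolding conj_class_def ..
  finally show ?thesis .
qed

lemma conj_class_conj_mem:
  assumes "a \<in> carrier G" "w \<in> conj_class G a" "h \<in> carrier G"
  shows "h \<otimes> w \<otimes> inv h \<in> conj_class G a"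
proof -
  obtain g where g: "g \<in> carrier G" "w = g \<otimes> a \<otimes> inv g"
    using assms(2) unfolding conj_class_def by auto
  then have "conj_class G w = conj_class G a"
    using assms(1) by (simp add: conj_class_conj_eq)
  moreover have "h \<otimes> w \<otimes> inv h \<in> conj_class G w"
    using assms(3) unfolding conj_class_def by blast
  ultimately show ?thesis by simp
qed

lemma conj_nat_pow:
  assumes "a \<in> carrier G" "g \<in> carrier G"
  shows "(g \<otimes> a \<otimes> inv g) [^] (n::nat) = g \<otimes> a [^] n \<otimes> inv g"
proof (induction n)
  case (Suc n)
  then have "(g \<otimes> a \<otimes> inv g) [^] Suc n = g \<otimes> a [^] n \<otimes> inv g \<otimes> (g \<otimes> a \<otimes> inv g)"
    by simp
  also have "\<dots> = g \<otimes> a [^] Suc n \<otimes> inv g"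
    using assms by (simp add: m_assoc)
  finally show ?case .
qed (use assms in simp)

lemma conj_class_nat_pow:
  assumes "a \<in> carrier G"
  shows "conj_class G (a [^] (n::nat)) = (\<lambda>w. w [^] n) ` conj_class G a"
  unfolding conj_class_def image_image using assms by (intro image_cong) (simp_all add: conj_nat_pow)

lemma conj_class_eq_inv_conj:
  assumes "a \<in> carrier G"
  shows "conj_class G a = (\<lambda>g. inv g \<otimes> a \<otimes> g) ` carrier G"
proof -
  have "(\<lambda>g. inv g \<otimes> a \<otimes> g) ` carrier G = (\<lambda>g. g \<otimes> a \<otimes> inv g) ` (\<lambda>g. inv g) ` carrier G"
    by (auto simp: image_iff)
  also have "(\<lambda>g. inv g) ` carrier G = carrier G"
    by (auto simp: image_iff) (metis inv_closed inv_inv)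
  finally show ?thesis unfolding conj_class_def ..
qed

lemma l_coset_eq_iff:
  assumes "subgroup H G" "g \<in> carrier G" "g' \<in> carrier G"
  shows "g <#\<^bsub>G\<^esub> H = g' <#\<^bsub>G\<^esub> H \<longleftrightarrow> inv g \<otimes> g' \<in> H"
proof
  assume "g <#\<^bsub>G\<^esub> H = g' <#\<^bsub>G\<^esub> H"
  moreover have "g' \<in> g' <#\<^bsub>G\<^esub> H"
    using assms(1,3) subgroup.one_closed unfolding l_coset_def by force
  ultimately obtain h where "h \<in> H" "g' = g \<otimes> h"
    unfolding l_coset_def by auto
  with assms show "inv g \<otimes> g' \<in> H"
    by (simp add: subgroup.mem_carrier)
next
  assume "inv g \<otimes> g' \<in> H"
  then have "g' \<in> g <#\<^bsub>G\<^esub> H"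
    using assms by (intro subgroup.lcos_module_rev) (simp_all add: is_group)
  then show "g <#\<^bsub>G\<^esub> H = g' <#\<^bsub>G\<^esub> H"
    using assms by (intro l_repr_independence)
qed

lemma r_coset_eq_iff:
  assumes "subgroup H G" "g \<in> carrier G" "g' \<in> carrier G"
  shows "H #> g = H #> g' \<longleftrightarrow> g' \<otimes> inv g \<in> H"
proof
  assume "H #> g = H #> g'"
  then have "g' \<in> H #> g"
    using assms rcos_self by blast
  then show "g' \<otimes> inv g \<in> H"
    using assms by (intro subgroup.rcos_module_imp) (simp_all add: is_group)
next
  assume "g' \<otimes> inv g \<in> H"
  then have "g' \<in> H #> g"
    using assms by (intro subgroup.rcos_module_rev) (simp_all add: is_group)
  then show "H #> g = H #> g'"
    using assms by (intro repr_independence)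
qed

lemma finite_l_cosets_centralizer_iff:
  assumes "a \<in> carrier G"
  shows "finite ((\<lambda>g. g <#\<^bsub>G\<^esub> centralizer G a) ` carrier G) \<longleftrightarrow> finite (conj_class G a)"
  unfolding conj_class_def using assms
  by (intro finite_image_iff_same_fibres)
     (simp add: l_coset_eq_iff centralizer_subgroup inv_mult_mem_centralizer_iff eq_commute)

lemma finite_rcosets_centralizer_iff:
  assumes "a \<in> carrier G"
  shows "finite (rcosets (centralizer G a)) \<longleftrightarrow> finite (conj_class G a)"
proof -
  have fibres: "centralizer G a #> g = centralizer G a #> g' \<longleftrightarrow> inv g \<otimes> a \<otimes> g = inv g' \<otimes> a \<otimes> g'"
    if "g \<in> carrier G" "g' \<in> carrier G" for g g'
    using inv_mult_mem_centralizer_iff[of a "inv g" "inv g'"] that assms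
    by (simp add: r_coset_eq_iff centralizer_subgroup eq_commute)
  have "rcosets (centralizer G a) = (\<lambda>g. centralizer G a #> g) ` carrier G"
    unfolding RCOSETS_def by auto
  moreover have "finite ((\<lambda>g. centralizer G a #> g) ` carrier G) \<longleftrightarrow>
                 finite ((\<lambda>g. inv g \<otimes> a \<otimes> g) ` carrier G)"
    using fibres by (rule finite_image_iff_same_fibres)
  ultimately show ?thesis
    using conj_class_eq_inv_conj[OF assms] by simp
qed

lemma FC_eq: "FC G = {a \<in> carrier G. finite (conj_class G a)}"
  unfolding FC_def using finite_rcosets_centralizer_iff by auto

lemma subgroup_FC: "subgroup (FC G) G"
proof (rule subgroupI)
  show "FC G \<subseteq> carrier G" unfolding FC_eq by auto
  have "conj_class G \<one> = {\<one>}" unfolding conj_class_def by auto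
  then show "FC G \<noteq> {}" unfolding FC_eq by auto
next
  fix a assume "a \<in> FC G"
  then have a: "a \<in> carrier G" "finite (conj_class G a)" unfolding FC_eq by auto
  have "conj_class G (inv a) = (\<lambda>u. inv u) ` conj_class G a"
    unfolding conj_class_def image_image using a
    by (intro image_cong) (simp_all add: inv_mult_group m_assoc)
  then show "inv a \<in> FC G" unfolding FC_eq using a by simp
next
  fix a b assume "a \<in> FC G" "b \<in> FC G"
  then have a: "a \<in> carrier G" "finite (conj_class G a)" and b: "b \<in> carrier G" "finite (conj_class G b)"
    unfolding FC_eq by auto
  have "conj_class G (a \<otimes> b) \<subseteq> (\<lambda>(u, v). u \<otimes> v) ` (conj_class G a \<times> conj_class G b)"
  proof
    fix w assume "w \<in> conj_class G (a \<otimes> b)"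
    then obtain g where g: "g \<in> carrier G" "w = g \<otimes> (a \<otimes> b) \<otimes> inv g"
      unfolding conj_class_def by auto
    then have "w = (g \<otimes> a \<otimes> inv g) \<otimes> (g \<otimes> b \<otimes> inv g)"
      using a b by (simp add: m_assoc)
    with g(1) show "w \<in> (\<lambda>(u, v). u \<otimes> v) ` (conj_class G a \<times> conj_class G b)"
      unfolding conj_class_def by auto
  qed
  moreover have "finite ((\<lambda>(u, v). u \<otimes> v) ` (conj_class G a \<times> conj_class G b))"
    using a b by simp
  ultimately have "finite (conj_class G (a \<otimes> b))"
    by (rule finite_subset)
  then show "a \<otimes> b \<in> FC G"
    unfolding FC_eq using a b by simp
qed

lemma conj_class_subset_FC:
  assumes "a \<in> FC G"
  shows "conj_class G a \<subseteq> FC G"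
proof
  fix u assume "u \<in> conj_class G a"
  then obtain g where g: "g \<in> carrier G" "u = g \<otimes> a \<otimes> inv g"
    unfolding conj_class_def by auto
  with assms show "u \<in> FC G"
    unfolding FC_eq by (simp add: conj_class_conj_eq)
qed

end

section \<open>Torsion in finitely generated abelian subgroups\<close>

definition torsion :: "('a, 'b) monoid_scheme \<Rightarrow> 'a set \<Rightarrow> 'a set" where
  "torsion G K = {t \<in> K. \<exists>n::nat. n > 0 \<and> t [^]\<^bsub>G\<^esub> n = \<one>\<^bsub>G\<^esub>}"

context group
begin

lemma subgroup_nat_pow_closed: "subgroup H G \<Longrightarrow> h \<in> H \<Longrightarrow> h [^] (n::nat) \<in> H"
  by (metis int_pow_int subgroup_int_pow_closed)

lemma generate_commute:
  assumes "u \<in> carrier G" "S \<subseteq> carrier G" "\<forall>s\<in>S. u \<otimes> s = s \<otimes> u" "t \<in> generate G S"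
  shows "u \<otimes> t = t \<otimes> u"
proof -
  have "generate G S \<subseteq> centralizer G u"
    using assms by (intro generate_subgroup_incl centralizer_subgroup) (auto simp: centralizer_def)
  then show ?thesis using assms(4) unfolding centralizer_def by auto
qed

lemma generate_commutative:
  assumes "S \<subseteq> carrier G" "\<forall>s\<in>S. \<forall>s'\<in>S. s \<otimes> s' = s' \<otimes> s"
  shows "\<forall>a\<in>generate G S. \<forall>b\<in>generate G S. a \<otimes> b = b \<otimes> a"
proof (intro ballI)
  fix a b assume a: "a \<in> generate G S" and b: "b \<in> generate G S"
  have "\<forall>s\<in>S. b \<otimes> s = s \<otimes> b"
    using assms b generate_commute[of _ S b] by (metis subsetD)
  moreover have "b \<in> carrier G" using assms(1) b generate_in_carrier by blast
  ultimately show "a \<otimes> b = b \<otimes> a"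
    using generate_commute[OF _ assms(1) _ a] by simp
qed

lemma int_pow_commute_generate:
  assumes w: "w \<in> carrier G" and W: "W \<subseteq> carrier G" and comm: "\<forall>s\<in>W. w \<otimes> s = s \<otimes> w"
    and b: "b \<in> generate G W"
  shows "b \<otimes> w [^] (j::int) = w [^] j \<otimes> b"
proof -
  have "b \<in> carrier G" using b W generate_in_carrier by blast
  moreover have "w [^] j \<in> generate G {w}" using generate_pow[OF w] by blast
  ultimately show ?thesis
    by (intro generate_commute) (use generate_commute[OF w W comm b] w in auto)
qed

lemma generate_insert_commuting:
  assumes w: "w \<in> carrier G" and W: "W \<subseteq> carrier G" and comm: "\<forall>s\<in>W. w \<otimes> s = s \<otimes> w"
    and "t \<in> generate G (insert w W)"
  shows "\<exists>b\<in>generate G W. \<exists>j::int. t = b \<otimes> w [^] j"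
  using \<open>t \<in> generate G (insert w W)\<close>
proof (induction rule: generate.induct)
  case one
  have "\<one> = \<one> \<otimes> w [^] (0::int)" using w by simp
  then show ?case using generate.one by blast
next
  case (incl h)
  then consider "h = w" | "h \<in> W" by blast
  then show ?case
  proof cases
    case 1
    then have "h = \<one> \<otimes> w [^] (1::int)" using w by simp
    then show ?thesis using generate.one by blast
  next
    case 2
    then have "h = h \<otimes> w [^] (0::int)" using W by auto
    then show ?thesis using generate.incl[OF 2] by blast
  qed
next
  case (inv h)
  then consider "h = w" | "h \<in> W" by blast
  then show ?case
  proof cases
    case 1
    then have "inv h = \<one> \<otimes> w [^] (-1::int)" using w by (simp add: int_pow_neg)
    then show ?thesis using generate.one by blast
  next
    case 2
    then have "inv h = inv h \<otimes> w [^] (0::int)" using W by auto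
    then show ?thesis using generate.inv[OF 2] by blast
  qed
next
  case (eng h1 h2)
  obtain b1 and j1 :: int where b1: "b1 \<in> generate G W" "h1 = b1 \<otimes> w [^] j1" using eng.IH(1) by blast
  obtain b2 and j2 :: int where b2: "b2 \<in> generate G W" "h2 = b2 \<otimes> w [^] j2" using eng.IH(2) by blast
  have carr: "b1 \<in> carrier G" "b2 \<in> carrier G"
    using b1 b2 W generate_in_carrier by blast+
  have comm_b2: "b2 \<otimes> w [^] j1 = w [^] j1 \<otimes> b2"
    using w W comm b2(1) by (rule int_pow_commute_generate)
  have "h1 \<otimes> h2 = b1 \<otimes> (w [^] j1 \<otimes> b2) \<otimes> w [^] j2"
    using b1(2) b2(2) carr w by (simp add: m_assoc)
  also have "\<dots> = (b1 \<otimes> b2) \<otimes> (w [^] j1 \<otimes> w [^] j2)"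
    using carr w by (simp flip: comm_b2 add: m_assoc)
  also have "\<dots> = (b1 \<otimes> b2) \<otimes> w [^] (j1 + j2)"
    using w by (simp add: int_pow_mult)
  finally show ?case
    using generate.eng[OF b1(1) b2(1)] by blast
qed

lemma int_pow_mem_imp_nat_pow_mem:
  assumes "subgroup K G" "w \<in> carrier G" "w [^] (j::int) \<in> K" "j \<noteq> 0"
  shows "\<exists>q::nat. q > 0 \<and> w [^] q \<in> K"
proof -
  have "w [^] \<bar>j\<bar> \<in> K"
    using assms by (cases "j \<ge> 0") (simp_all add: int_pow_neg subgroup.m_inv_closed)
  then have "w [^] nat \<bar>j\<bar> \<in> K"
    by (metis int_pow_int abs_ge_zero nat_0_le)
  then show ?thesis using assms(4) by (intro exI[of _ "nat \<bar>j\<bar>"]) simp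
qed

lemma generate_insert_commuting_nat_pow:
  assumes w: "w \<in> carrier G" and W: "W \<subseteq> carrier G" and comm: "\<forall>s\<in>W. w \<otimes> s = s \<otimes> w"
    and b: "b \<in> generate G W"
  shows "(b \<otimes> w [^] (j::int)) [^] (n::nat) = b [^] n \<otimes> w [^] (j * int n)"
proof -
  have "b \<in> carrier G" using b W generate_in_carrier by blast
  with w W comm b have "(b \<otimes> w [^] j) [^] n = b [^] n \<otimes> (w [^] j) [^] n"
    by (intro pow_mult_distrib int_pow_commute_generate) simp_all
  also have "(w [^] j) [^] n = w [^] (j * int n)"
    using w by (simp add: int_pow_pow flip: int_pow_int)
  finally show ?thesis .
qed

lemma torsion_generate_insert_subset:
  assumes w: "w \<in> carrier G" and W: "W \<subseteq> carrier G" and comm: "\<forall>s\<in>W. w \<otimes> s = s \<otimes> w"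
    and no_pow: "\<not> (\<exists>q::nat. q > 0 \<and> w [^] q \<in> generate G W)"
  shows "torsion G (generate G (insert w W)) \<subseteq> generate G W"
proof
  fix t assume "t \<in> torsion G (generate G (insert w W))"
  then obtain n :: nat where n: "n > 0" "t [^] n = \<one>" and t: "t \<in> generate G (insert w W)"
    unfolding torsion_def by auto
  obtain b j where b: "b \<in> generate G W" "t = b \<otimes> w [^] (j::int)"
    using generate_insert_commuting[OF w W comm t] by blast
  have K: "subgroup (generate G W) G" using generate_is_subgroup[OF W] .
  have bn: "b [^] n \<in> generate G W" using K b(1) by (rule subgroup_nat_pow_closed)
  have "b [^] n \<otimes> w [^] (j * int n) = \<one>"
    using generate_insert_commuting_nat_pow[OF w W comm b(1)] b(2) n(2) by simp
  then have "w [^] (j * int n) = inv (b [^] n)"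
    using inv_solve_left[of "w [^] (j * int n)" "b [^] n" \<one>] subgroup.mem_carrier[OF K bn] w
    by simp
  then have "w [^] (j * int n) \<in> generate G W"
    using K bn by (simp add: subgroup.m_inv_closed)
  then have "j * int n = 0"
    using no_pow int_pow_mem_imp_nat_pow_mem[OF K w] by blast
  with n(1) b W generate_in_carrier show "t \<in> generate G W" by auto
qed

lemma torsion_pow_mem_generate_insert:
  assumes w: "w \<in> carrier G" and W: "W \<subseteq> carrier G" and comm: "\<forall>s\<in>W. w \<otimes> s = s \<otimes> w"
  shows "\<exists>q::nat. q > 0 \<and> (\<forall>t\<in>torsion G (generate G (insert w W)). t [^] q \<in> generate G W)"
proof (cases "\<exists>q::nat. q > 0 \<and> w [^] q \<in> generate G W")
  case True
  then obtain q :: nat where q: "q > 0" "w [^] q \<in> generate G W" by blast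
  have K: "subgroup (generate G W) G" using generate_is_subgroup[OF W] .
  have "t [^] q \<in> generate G W" if t: "t \<in> generate G (insert w W)" for t
  proof -
    obtain b j where b: "b \<in> generate G W" "t = b \<otimes> w [^] (j::int)"
      using generate_insert_commuting[OF w W comm t] by blast
    have "w [^] (j * int q) = (w [^] q) [^] j"
      using w by (simp add: int_pow_pow mult.commute flip: int_pow_int)
    then have "t [^] q = b [^] q \<otimes> (w [^] q) [^] j"
      using generate_insert_commuting_nat_pow[OF w W comm b(1)] b(2) by simp
    moreover have "b [^] q \<in> generate G W" using K b(1) by (rule subgroup_nat_pow_closed)
    moreover have "(w [^] q) [^] j \<in> generate G W" using K q(2) by (rule subgroup_int_pow_closed)
    ultimately show ?thesis using subgroup.m_closed[OF K] by simp
  qed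
  then have "\<forall>t\<in>torsion G (generate G (insert w W)). t [^] q \<in> generate G W"
    unfolding torsion_def by simp
  with q(1) show ?thesis by blast
next
  case False
  then have "t [^] (1::nat) \<in> generate G W" if "t \<in> torsion G (generate G (insert w W))" for t
    using that torsion_generate_insert_subset[OF w W comm] generate_in_carrier[OF W] by auto
  then show ?thesis by blast
qed

lemma torsion_generate_bounded_exponent:
  assumes "finite W" "W \<subseteq> carrier G" "\<forall>s\<in>W. \<forall>s'\<in>W. s \<otimes> s' = s' \<otimes> s"
  shows "\<exists>d::nat. d > 0 \<and> (\<forall>t\<in>torsion G (generate G W). t [^] d = \<one>)"
  using assms
proof (induction W rule: finite_induct)
  case empty
  then show ?case by (intro exI[of _ "1::nat"]) (simp add: generate_empty torsion_def)
next
  case (insert w W)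
  then have w: "w \<in> carrier G" and W: "W \<subseteq> carrier G" by auto
  obtain d :: nat where d: "d > 0" "\<forall>t\<in>torsion G (generate G W). t [^] d = \<one>"
    using insert.IH W insert.prems(2) by blast
  obtain q :: nat where q: "q > 0" "\<forall>t\<in>torsion G (generate G (insert w W)). t [^] q \<in> generate G W"
    using torsion_pow_mem_generate_insert[OF w W] insert.prems(2) by blast
  have "t [^] (q * d) = \<one>" if t: "t \<in> torsion G (generate G (insert w W))" for t
  proof -
    obtain n :: nat where n: "n > 0" "t [^] n = \<one>" and "t \<in> generate G (insert w W)"
      using t unfolding torsion_def by auto
    then have tc: "t \<in> carrier G" using insert.prems(1) generate_in_carrier by blast
    have "(t [^] q) [^] n = (t [^] n) [^] q"
      using tc by (simp add: nat_pow_pow mult.commute)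
    then have "t [^] q \<in> torsion G (generate G W)"
      using q(2) t n unfolding torsion_def by auto
    then have "(t [^] q) [^] d = \<one>" using d(2) by blast
    then show ?thesis using tc by (simp add: nat_pow_pow)
  qed
  then show ?case using q(1) d(1) by (intro exI[of _ "q * d"]) simp
qed

lemma nat_pow_image_subset: "subgroup A G \<Longrightarrow> (\<lambda>a. a [^] (d::nat)) ` A \<subseteq> A"
  using subgroup_nat_pow_closed by blast

lemma subgroup_nat_pow_image:
  assumes A: "subgroup A G" and comm: "\<forall>a\<in>A. \<forall>b\<in>A. a \<otimes> b = b \<otimes> a"
  shows "subgroup ((\<lambda>a. a [^] (d::nat)) ` A) G"
proof (rule subgroupI)
  show "(\<lambda>a. a [^] d) ` A \<subseteq> carrier G"
    using nat_pow_image_subset[OF A] subgroup.subset[OF A] by blast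
  show "(\<lambda>a. a [^] d) ` A \<noteq> {}"
    using subgroup.one_closed[OF A] by blast
next
  fix v assume "v \<in> (\<lambda>a. a [^] d) ` A"
  then obtain a where a: "a \<in> A" "v = a [^] d" by blast
  then have "inv v = inv a [^] d"
    using subgroup.mem_carrier[OF A] by (simp add: nat_pow_inv)
  then show "inv v \<in> (\<lambda>a. a [^] d) ` A"
    using subgroup.m_inv_closed[OF A a(1)] by blast
next
  fix v v' assume "v \<in> (\<lambda>a. a [^] d) ` A" "v' \<in> (\<lambda>a. a [^] d) ` A"
  then obtain a a' where a: "a \<in> A" "v = a [^] d" and a': "a' \<in> A" "v' = a' [^] d" by blast
  have "(a \<otimes> a') [^] d = v \<otimes> v'"
    unfolding a(2) a'(2) using a(1) a'(1) comm subgroup.mem_carrier[OF A]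
    by (intro pow_mult_distrib) auto
  then show "v \<otimes> v' \<in> (\<lambda>a. a [^] d) ` A"
    using subgroup.m_closed[OF A a(1) a'(1)] by (metis image_eqI)
qed

lemma normal_nat_pow_image:
  assumes A: "A \<lhd> G" and comm: "\<forall>a\<in>A. \<forall>b\<in>A. a \<otimes> b = b \<otimes> a"
  shows "(\<lambda>a. a [^] (d::nat)) ` A \<lhd> G"
  unfolding normal_inv_iff
proof (intro conjI ballI)
  have sub: "subgroup A G" using A normal_imp_subgroup by blast
  then show "subgroup ((\<lambda>a. a [^] d) ` A) G" using comm by (rule subgroup_nat_pow_image)
  fix g v assume g: "g \<in> carrier G" and "v \<in> (\<lambda>a. a [^] d) ` A"
  then obtain a where a: "a \<in> A" "v = a [^] d" by blast
  then have "g \<otimes> v \<otimes> inv g = (g \<otimes> a \<otimes> inv g) [^] d"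
    using g subgroup.mem_carrier[OF sub] by (simp add: conj_nat_pow)
  moreover have "g \<otimes> a \<otimes> inv g \<in> A"
    using A g a(1) unfolding normal_inv_iff by blast
  ultimately show "g \<otimes> v \<otimes> inv g \<in> (\<lambda>a. a [^] d) ` A" by blast
qed

lemma torsion_free_nat_pow_image:
  assumes A: "subgroup A G" and d: "\<forall>t\<in>torsion G A. t [^] (d::nat) = \<one>"
  shows "torsion_free G ((\<lambda>a. a [^] d) ` A)"
  unfolding torsion_free_def
proof (intro ballI allI impI)
  fix v n assume "v \<in> (\<lambda>a. a [^] d) ` A" and n: "(n::nat) > 0" "v [^] n = \<one>"
  then obtain a where a: "a \<in> A" "v = a [^] d" by blast
  then have "a [^] (d * n) = \<one>"
    using n(2) subgroup.mem_carrier[OF A] by (simp add: nat_pow_pow)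
  show "v = \<one>"
  proof (cases "d = 0")
    case False
    with \<open>a [^] (d * n) = \<one>\<close> n(1) have "a \<in> torsion G A"
      using a(1) unfolding torsion_def by (intro CollectI conjI exI[of _ "d * n"]) auto
    then show ?thesis using a d by simp
  qed (use a in simp)
qed

end

section \<open>Elements with finite conjugacy class\<close>

context group
begin

lemma finite_conj_class_imp_power_centralizes:
  assumes y: "y \<in> carrier G" and fin: "finite (conj_class G y)"
  shows "\<exists>m::nat. m > 0 \<and> (\<forall>w\<in>conj_class G y. y [^] m \<otimes> w = w \<otimes> y [^] m)"
proof -
  define F where "F i = restrict (\<lambda>w. y [^] i \<otimes> w \<otimes> inv (y [^] i)) (conj_class G y)" for i :: nat
  have "range F \<subseteq> conj_class G y \<rightarrow>\<^sub>E conj_class G y"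
    using y conj_class_conj_mem[OF y] by (auto simp: F_def)
  then have "finite (range F)"
    using fin by (meson finite_PiE finite_subset)
  then have "\<not> inj F"
    using finite_imageD infinite_UNIV_nat by blast
  then obtain i j where ij: "i < j" "F i = F j"
    unfolding inj_def by (metis linorder_neqE_nat)
  define z where "z = y [^] (j - i)"
  have z: "z \<in> carrier G" using y by (simp add: z_def)
  have yj: "y [^] j = y [^] i \<otimes> z"
    using y ij(1) by (simp add: z_def nat_pow_mult)
  have "z \<otimes> w = w \<otimes> z" if w: "w \<in> conj_class G y" for w
  proof -
    have wc: "w \<in> carrier G" using w conj_class_subset_carrier[OF y] by blast
    have "y [^] i \<otimes> w \<otimes> inv (y [^] i) = y [^] i \<otimes> (z \<otimes> w \<otimes> inv z) \<otimes> inv (y [^] i)"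
      using fun_cong[OF ij(2), of w] w wc y z
      by (simp add: F_def yj m_assoc inv_mult_group)
    then have "w = z \<otimes> w \<otimes> inv z"
      using wc y z by simp
    then have "w \<otimes> z = z \<otimes> w \<otimes> inv z \<otimes> z"
      by simp
    also have "\<dots> = z \<otimes> w"
      using wc z by (simp add: m_assoc)
    finally show ?thesis by simp
  qed
  then show ?thesis
    using ij(1) by (intro exI[of _ "j - i"]) (simp add: z_def)
qed

lemma conj_class_commute:
  assumes a: "a \<in> carrier G" and b: "b \<in> carrier G"
    and comm: "\<forall>w\<in>conj_class G b. a \<otimes> w = w \<otimes> a"
  shows "\<forall>u\<in>conj_class G a. \<forall>v\<in>conj_class G b. u \<otimes> v = v \<otimes> u"
proof (intro ballI)
  fix u v assume u: "u \<in> conj_class G a" and v: "v \<in> conj_class G b"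
  then obtain g where g: "g \<in> carrier G" "u = g \<otimes> a \<otimes> inv g"
    unfolding conj_class_def by auto
  define v' where "v' = inv g \<otimes> v \<otimes> g"
  have v'_mem: "v' \<in> conj_class G b"
    using conj_class_conj_mem[OF b v, of "inv g"] g(1) by (simp add: v'_def)
  have vc: "v \<in> carrier G" using v conj_class_subset_carrier[OF b] by blast
  have v'c: "v' \<in> carrier G" using vc g(1) by (simp add: v'_def)
  have v_eq: "v = g \<otimes> v' \<otimes> inv g"
    using vc g(1) by (simp add: v'_def m_assoc)
  have "u \<otimes> v = g \<otimes> (a \<otimes> v') \<otimes> inv g"
    using g a v'c by (simp add: v_eq m_assoc)
  also have "\<dots> = g \<otimes> (v' \<otimes> a) \<otimes> inv g"
    using comm v'_mem by simp
  also have "\<dots> = v \<otimes> u"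
    using g a v'c by (simp add: v_eq m_assoc)
  finally show "u \<otimes> v = v \<otimes> u" .
qed

lemma conj_class_centralizing_power_commutative:
  assumes y: "y \<in> carrier G" and m: "\<forall>w\<in>conj_class G y. y [^] m \<otimes> w = w \<otimes> y [^] m"
  shows "\<forall>u\<in>conj_class G (y [^] (m::nat)). \<forall>v\<in>conj_class G (y [^] m). u \<otimes> v = v \<otimes> u"
proof (intro ballI)
  fix u v assume u: "u \<in> conj_class G (y [^] m)" and "v \<in> conj_class G (y [^] m)"
  then obtain w where w: "w \<in> conj_class G y" "v = w [^] m"
    using y by (auto simp: conj_class_nat_pow)
  have "u \<otimes> w = w \<otimes> u"
    using conj_class_commute[of "y [^] m" y] y m u w(1) by blast
  moreover have "w \<in> carrier G" "u \<in> carrier G"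
    using w(1) u y conj_class_subset_carrier by blast+
  ultimately show "u \<otimes> v = v \<otimes> u"
    using group_commutes_pow[of w u m] w(2) by simp
qed

lemma finite_commuting_normal_set_imp_torsion_free_normal:
  assumes Z: "finite Z" "Z \<subseteq> FC G" and comm: "\<forall>u\<in>Z. \<forall>v\<in>Z. u \<otimes> v = v \<otimes> u"
    and conj: "\<And>z g. z \<in> Z \<Longrightarrow> g \<in> carrier G \<Longrightarrow> g \<otimes> z \<otimes> inv g \<in> Z"
  shows "\<exists>d::nat. d > 0 \<and> (\<exists>N. subgroup N G \<and> (\<forall>z\<in>Z. z [^] d \<in> N) \<and> torsion_free G N
           \<and> (\<forall>a\<in>N. \<forall>b\<in>N. a \<otimes> b = b \<otimes> a) \<and> N \<lhd> G \<and> N \<subseteq> FC G)"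
proof -
  have Z_carr: "Z \<subseteq> carrier G" using Z(2) subgroup.subset[OF subgroup_FC] by blast
  define A where "A = generate G Z"
  have A_sub: "subgroup A G"
    unfolding A_def using Z_carr by (rule generate_is_subgroup)
  have A_comm: "\<forall>a\<in>A. \<forall>b\<in>A. a \<otimes> b = b \<otimes> a"
    unfolding A_def using Z_carr comm by (rule generate_commutative)
  have A_normal: "A \<lhd> G"
    unfolding A_def using Z_carr conj by (rule normal_generateI)
  have A_FC: "A \<subseteq> FC G"
    unfolding A_def using Z(2) subgroup_FC by (rule generate_subgroup_incl)
  obtain d :: nat where d: "d > 0" "\<forall>t\<in>torsion G A. t [^] d = \<one>"
    using torsion_generate_bounded_exponent[OF Z(1) Z_carr comm] unfolding A_def by blast
  define N where "N = (\<lambda>a. a [^] d) ` A"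
  have "\<forall>z\<in>Z. z [^] d \<in> N"
    unfolding N_def A_def by (intro ballI imageI generate.incl)
  moreover have "N \<subseteq> A"
    unfolding N_def using A_sub by (rule nat_pow_image_subset)
  moreover have "subgroup N G"
    unfolding N_def using A_sub A_comm by (rule subgroup_nat_pow_image)
  moreover have "torsion_free G N"
    unfolding N_def using A_sub d(2) by (rule torsion_free_nat_pow_image)
  moreover have "N \<lhd> G"
    unfolding N_def using A_normal A_comm by (rule normal_nat_pow_image)
  ultimately show ?thesis
    using d(1) A_comm A_FC by blast
qed

theorem finite_conj_class_power_mem_torsion_free_normal:
  assumes y: "y \<in> carrier G" and fin: "finite (conj_class G y)"
  shows "\<exists>k::nat. k > 0 \<and> (\<exists>N. subgroup N G \<and> y [^] k \<in> N \<and> torsion_free G N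
           \<and> (\<forall>a\<in>N. \<forall>b\<in>N. a \<otimes> b = b \<otimes> a) \<and> N \<lhd> G \<and> N \<subseteq> FC G)"
proof -
  obtain m :: nat where m: "m > 0" "\<forall>w\<in>conj_class G y. y [^] m \<otimes> w = w \<otimes> y [^] m"
    using finite_conj_class_imp_power_centralizes[OF y fin] by blast
  have "y [^] m \<in> FC G"
    using y fin by (simp add: FC_eq conj_class_nat_pow)
  then have Z: "finite (conj_class G (y [^] m))" "conj_class G (y [^] m) \<subseteq> FC G"
    using conj_class_subset_FC FC_eq by blast+
  obtain d :: nat and N where d: "d > 0" "\<forall>z\<in>conj_class G (y [^] m). z [^] d \<in> N"
    and N: "subgroup N G" "torsion_free G N" "\<forall>a\<in>N. \<forall>b\<in>N. a \<otimes> b = b \<otimes> a" "N \<lhd> G" "N \<subseteq> FC G"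
    using finite_commuting_normal_set_imp_torsion_free_normal[OF Z
        conj_class_centralizing_power_commutative[OF y m(2)] conj_class_conj_mem[of "y [^] m"]] y
    by auto
  have "(y [^] m) [^] d \<in> N"
    using d(2) conj_class_self[of "y [^] m"] y by simp
  then have "y [^] (m * d) \<in> N"
    using y by (simp add: nat_pow_pow)
  with m(1) d(1) N show ?thesis
    by (intro exI[of _ "m * d"]) auto
qed

end

section \<open>Haar measure\<close>

lemma normalized_haar_finite_measure: "normalized_haar G T H \<mu> \<Longrightarrow> finite_measure \<mu>"
  unfolding normalized_haar_def by (auto intro: finite_measureI)

text \<open>Measurability of a translate is not part of the invariance hypothesis, but it follows
  from positivity, since \<open>emeasure\<close> is \<open>0\<close> outside the measurable sets.\<close>
lemma normalized_haar_translate: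
  assumes "normalized_haar G T H \<mu>" "h \<in> H" "A \<in> sets \<mu>" "emeasure \<mu> A > 0"
  shows "h <#\<^bsub>G\<^esub> A \<in> sets \<mu>" and "measure \<mu> (h <#\<^bsub>G\<^esub> A) = measure \<mu> A"
proof -
  have eq: "emeasure \<mu> (h <#\<^bsub>G\<^esub> A) = emeasure \<mu> A"
    using assms(1-3) unfolding normalized_haar_def by blast
  with assms(4) show "h <#\<^bsub>G\<^esub> A \<in> sets \<mu>"
    using emeasure_notin_sets by fastforce
  from eq show "measure \<mu> (h <#\<^bsub>G\<^esub> A) = measure \<mu> A"
    by (simp add: measure_def)
qed

lemma normalized_haar_sets_subset:
  assumes "normalized_haar G T H \<mu>" "A \<in> sets \<mu>"
  shows "A \<subseteq> H"
  using sets.sets_into_space[OF assms(2)] assms(1) by (simp add: normalized_haar_def)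

lemma top_gen_subset_carrier:
  assumes "compact_group G T"
  shows "top_gen G T x \<subseteq> carrier G"
proof -
  have "topspace T = carrier G" using assms by (simp add: compact_group_def)
  then show ?thesis unfolding top_gen_def by (metis closure_of_subset_topspace)
qed

lemma nat_pow_mem_top_gen:
  assumes "compact_group G T" "x \<in> carrier G"
  shows "x [^]\<^bsub>G\<^esub> (n::nat) \<in> top_gen G T x"
proof -
  interpret group G using assms(1) unfolding compact_group_def by blast
  have "x [^]\<^bsub>G\<^esub> n \<in> generate G {x}"
    using assms(2) by (intro subgroup_nat_pow_closed generate_is_subgroup generate.incl) auto
  moreover have "generate G {x} \<subseteq> topspace T"
    using generate_incl[of "{x}"] assms unfolding compact_group_def by auto
  ultimately show ?thesis
    unfolding top_gen_def using closure_of_subset by blast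
qed

context group
begin

lemma finite_l_cosets_of_positive_haar_measure:
  assumes haar: "normalized_haar G T (carrier G) \<mu>" and C: "subgroup C G"
    and pos: "emeasure \<mu> C > 0"
  shows "finite ((\<lambda>g. g <#\<^bsub>G\<^esub> C) ` carrier G)"
proof -
  interpret finite_measure \<mu> using haar by (rule normalized_haar_finite_measure)
  have C_sets: "C \<in> sets \<mu>"
    using pos emeasure_notin_sets by fastforce
  show ?thesis
  proof (rule disjoint_family_equal_measure_imp_finite[where F = id and p = "measure \<mu> C"])
    show "disjoint_family_on id ((\<lambda>g. g <#\<^bsub>G\<^esub> C) ` carrier G)"
      unfolding disjoint_family_on_def
      by (auto dest: l_repr_independence[OF _ _ C])
    show "id S \<in> sets \<mu>" and "measure \<mu> (id S) = measure \<mu> C"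
      if "S \<in> (\<lambda>g. g <#\<^bsub>G\<^esub> C) ` carrier G" for S
      using that normalized_haar_translate[OF haar _ C_sets pos] by auto
    show "measure \<mu> C > 0"
      using pos by (simp add: emeasure_eq_measure)
  qed
qed

lemma positive_haar_measure_centralizer_imp_FC:
  assumes "normalized_haar G T (carrier G) \<mu>" "a \<in> carrier G"
    and "emeasure \<mu> (centralizer G a) > 0"
  shows "a \<in> FC G"
  using finite_l_cosets_of_positive_haar_measure[OF assms(1) centralizer_subgroup[OF assms(2)] assms(3)]
    finite_l_cosets_centralizer_iff[OF assms(2)] assms(2)
  unfolding FC_eq by simp

lemma haar_recurrence:
  assumes haar: "normalized_haar G T H \<mu>" and H: "H \<subseteq> carrier G"
    and x: "x \<in> carrier G" "\<And>n::nat. x [^] n \<in> H"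
    and A: "A \<in> sets \<mu>" "emeasure \<mu> A > 0"
  shows "\<exists>e::nat. e > 0 \<and> (\<exists>a\<in>A. \<exists>b\<in>A. x [^] e = a \<otimes> inv b)"
proof -
  interpret finite_measure \<mu> using haar by (rule normalized_haar_finite_measure)
  have "\<not> disjoint_family (\<lambda>n::nat. x [^] n <#\<^bsub>G\<^esub> A)"
  proof
    assume "disjoint_family (\<lambda>n::nat. x [^] n <#\<^bsub>G\<^esub> A)"
    then have "finite (UNIV :: nat set)"
      using normalized_haar_translate[OF haar x(2) A] A(2)
      by (intro disjoint_family_equal_measure_imp_finite
            [where F = "\<lambda>n. x [^] n <#\<^bsub>G\<^esub> A" and p = "measure \<mu> A"])
         (simp_all add: emeasure_eq_measure)
    then show False by simp
  qed
  then obtain i j :: nat where "i \<noteq> j" "(x [^] i <#\<^bsub>G\<^esub> A) \<inter> (x [^] j <#\<^bsub>G\<^esub> A) \<noteq> {}"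
    unfolding disjoint_family_on_def by blast
  then obtain i j :: nat where ij: "i < j" "(x [^] i <#\<^bsub>G\<^esub> A) \<inter> (x [^] j <#\<^bsub>G\<^esub> A) \<noteq> {}"
    by (metis Int_commute linorder_neqE_nat)
  then obtain a b where ab: "a \<in> A" "b \<in> A" "x [^] i \<otimes> a = x [^] j \<otimes> b"
    unfolding l_coset_def by blast
  have "A \<subseteq> carrier G"
    using normalized_haar_sets_subset[OF haar A(1)] H by blast
  with ab have carr: "a \<in> carrier G" "b \<in> carrier G" by auto
  have "x [^] i \<otimes> a = x [^] i \<otimes> (x [^] (j - i) \<otimes> b)"
    using ab(3) ij(1) x(1) carr nat_pow_mult[of x i "j - i"] by (simp flip: m_assoc)
  then have "a = x [^] (j - i) \<otimes> b"
    using x(1) carr by simp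
  then have "x [^] (j - i) = a \<otimes> inv b"
    using x(1) carr by (simp add: m_assoc)
  then show ?thesis
    using ij(1) ab(1,2) by (intro exI[of _ "j - i"]) auto
qed

end

theorem lemma2p2:
  fixes G :: "('a, 'b) monoid_scheme" and T :: "'a topology" and x :: 'a
    and \<mu>H \<mu>G :: "'a measure"
  assumes "compact_group G T"
    and "x \<in> carrier G"
    and "normalized_haar G T (carrier G) \<mu>G"
    and "normalized_haar G T (top_gen G T x) \<mu>H"
    and "commuting_prob G \<mu>H \<mu>G > 0"
  shows "\<exists>e::nat. e > 0 \<and> (\<exists>N. subgroup N G \<and> x [^]\<^bsub>G\<^esub> e \<in> N \<and> torsion_free G N
           \<and> (\<forall>a\<in>N. \<forall>b\<in>N. a \<otimes>\<^bsub>G\<^esub> b = b \<otimes>\<^bsub>G\<^esub> a) \<and> N \<lhd> G \<and> N \<subseteq> FC G)"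
proof -
  interpret group G using assms(1) unfolding compact_group_def by blast
  have H: "top_gen G T x \<subseteq> carrier G"
    using assms(1) by (rule top_gen_subset_carrier)
  obtain A where A: "A \<in> sets \<mu>H" "0 < emeasure \<mu>H A"
    and A_cent: "\<And>h. h \<in> A \<Longrightarrow> 0 < emeasure \<mu>G (centralizer G h)"
    using assms(5) unfolding commuting_prob_def by (rule nn_integral_pos_imp_pos_set) blast
  have A_FC: "A \<subseteq> FC G"
    using normalized_haar_sets_subset[OF assms(4) A(1)] H A_cent
      positive_haar_measure_centralizer_imp_FC[OF assms(3)] by blast
  obtain e :: nat and a b where e: "e > 0" "a \<in> A" "b \<in> A" "x [^]\<^bsub>G\<^esub> e = a \<otimes>\<^bsub>G\<^esub> inv\<^bsub>G\<^esub> b"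
    using haar_recurrence[OF assms(4) H assms(2) nat_pow_mem_top_gen[OF assms(1,2)] A] by blast
  then have "x [^]\<^bsub>G\<^esub> e \<in> FC G"
    using A_FC by (simp add: subsetD subgroup.m_closed[OF subgroup_FC] subgroup.m_inv_closed[OF subgroup_FC])
  then obtain k :: nat and N where "k > 0" "subgroup N G" "(x [^]\<^bsub>G\<^esub> e) [^]\<^bsub>G\<^esub> k \<in> N"
    "torsion_free G N" "\<forall>a\<in>N. \<forall>b\<in>N. a \<otimes>\<^bsub>G\<^esub> b = b \<otimes>\<^bsub>G\<^esub> a" "N \<lhd> G" "N \<subseteq> FC G"
    using finite_conj_class_power_mem_torsion_free_normal unfolding FC_eq by blast
  with e(1) assms(2) show ?thesis
    by (intro exI[of _ "e * k"]) (auto simp: nat_pow_pow)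
qed

end
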